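(* For every $n\ge 3$ with $n\ne 4$, the wheel $W_n$ is distance antimagic; the wheel $W_4$ is not distance antimagic.
   Context: The wheel $W_n$ ($n\ge3$) is obtained from a cycle $x_1x_2\cdots x_nx_1$ by adding a center vertex $x_0$ adjacent to all $x_1,\dots,x_n$; it has $n+1$ vertices. For a graph $G=(V,E)$ with $v=|V|$ and a bijection $f:V\to\{1,\dots,v\}$, the vertex-weight of $x$ is $w(x)=\sum_{y\in N(x)}f(y)$ with $N(x)$ the set of neighbours of $x$. $G$ is distance antimagic if it admits a bijection $f$ under which all vertex-weights are pairwise distinct. *)

theory Defs
  imports Main
begin

text \<open>A finite simple graph given by a vertex set V and a symmetric irreflexive
adjacency relation adj. Open neighbourhood of x.\<close>
definition nbhd :: "'a set \<Rightarrow> ('a \<Rightarrow> 'a \<Rightarrow> bool) \<Rightarrow> 'a \<Rightarrow> 'a set" where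
  "nbhd V adj x = {y \<in> V. adj x y}"

definition vweight :: "'a set \<Rightarrow> ('a \<Rightarrow> 'a \<Rightarrow> bool) \<Rightarrow> ('a \<Rightarrow> nat) \<Rightarrow> 'a \<Rightarrow> nat" where
  "vweight V adj f x = (\<Sum>y\<in>nbhd V adj x. f y)"

definition distance_antimagic :: "'a set \<Rightarrow> ('a \<Rightarrow> 'a \<Rightarrow> bool) \<Rightarrow> bool" where
  "distance_antimagic V adj \<longleftrightarrow>
     (\<exists>f. bij_betw f V {1..card V} \<and> inj_on (vweight V adj f) V)"

text \<open>The wheel W_n: vertices 0..n, centre 0, rim cycle 1,2,...,n,1.\<close>
definition wheel_V :: "nat \<Rightarrow> nat set" where
  "wheel_V n = {0..n}"

definition wheel_adj :: "nat \<Rightarrow> nat \<Rightarrow> nat \<Rightarrow> bool" where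
  "wheel_adj n x y \<longleftrightarrow>
     x \<in> {0..n} \<and> y \<in> {0..n} \<and> x \<noteq> y \<and>
     (x = 0 \<or> y = 0 \<or> y = x mod n + 1 \<or> x = y mod n + 1)"

end

theory Submission
  imports Defs "HOL-Combinatorics.Transposition"
begin

text \<open>Put the largest label \<open>n + 1\<close> on the centre. Its weight is then the sum of all rim
labels, \<open>n (n + 1) / 2\<close>, while a rim vertex \<open>i\<close> has weight \<open>n + 1\<close> plus the labels of its
two rim neighbours; so it suffices to label the rim such that these neighbour sums are pairwise
distinct and stay away from \<open>n (n + 1) / 2 - (n + 1)\<close>, which is automatic once \<open>n \<ge> 6\<close>.
For odd \<open>n\<close> the identity works: the neighbour sum of \<open>i\<close> is \<open>2 i\<close> except at the two ends of
the rim, where it is odd. For even \<open>n \<ge> 6\<close> swapping the labels \<open>1\<close> and \<open>n\<close> makes the four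
exceptional sums odd and pairwise distinct. In \<open>W\<^sub>4\<close> the opposite rim vertices \<open>1\<close> and \<open>3\<close>
have the same neighbourhood, hence the same weight under every labelling.\<close>

lemma not_distance_antimagic_if_same_nbhd:
  assumes "x \<in> V" "y \<in> V" "x \<noteq> y" "nbhd V adj x = nbhd V adj y"
  shows "\<not> distance_antimagic V adj"
proof
  assume "distance_antimagic V adj"
  then obtain f where "inj_on (vweight V adj f) V"
    unfolding distance_antimagic_def by blast
  moreover have "vweight V adj f x = vweight V adj f y"
    unfolding vweight_def using assms(4) by simp
  ultimately show False
    using assms(1-3) by (auto dest: inj_onD)
qed

lemma bij_betw_fun_upd_insert:
  assumes "bij_betw g A B" "a \<notin> A" "b \<notin> B"
  shows "bij_betw (g(a := b)) (insert a A) (insert b B)"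
proof -
  have "bij_betw (g(a := b)) A B"
    using assms(1,2) by (subst bij_betw_cong[where g = g]) auto
  then show ?thesis
    using notIn_Un_bij_betw[of a A "g(a := b)" B] assms(2,3) by simp
qed

definition rim_next :: "nat \<Rightarrow> nat \<Rightarrow> nat" where
  "rim_next n i = (if i = n then 1 else i + 1)"

definition rim_prev :: "nat \<Rightarrow> nat \<Rightarrow> nat" where
  "rim_prev n i = (if i = 1 then n else i - 1)"

definition rim_sum :: "nat \<Rightarrow> (nat \<Rightarrow> nat) \<Rightarrow> nat \<Rightarrow> nat" where
  "rim_sum n g i = g (rim_prev n i) + g (rim_next n i)"

lemma wheel_nbhd_centre:
  "3 \<le> n \<Longrightarrow> nbhd (wheel_V n) (wheel_adj n) 0 = {1..n}"
  unfolding nbhd_def wheel_V_def wheel_adj_def by auto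

lemma wheel_nbhd_rim:
  assumes "3 \<le> n" "i \<in> {1..n}"
  shows "nbhd (wheel_V n) (wheel_adj n) i = {0, rim_prev n i, rim_next n i}"
proof -
  have "y \<in> nbhd (wheel_V n) (wheel_adj n) i \<longleftrightarrow> y \<in> {0, rim_prev n i, rim_next n i}" for y
  proof (cases "y = 0")
    case True
    then show ?thesis
      using assms unfolding nbhd_def wheel_V_def wheel_adj_def by auto
  next
    case False
    then show ?thesis
      using assms unfolding nbhd_def wheel_V_def wheel_adj_def rim_next_def rim_prev_def
      by (cases "y < n"; cases "i < n") auto
  qed
  then show ?thesis
    by blast
qed

lemma rim_prev_next_mem:
  assumes "3 \<le> n" "i \<in> {1..n}"
  shows "rim_prev n i \<in> {1..n}" "rim_next n i \<in> {1..n}" "rim_prev n i \<noteq> rim_next n i"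
  using assms unfolding rim_prev_def rim_next_def by auto

lemma vweight_wheel_centre:
  "3 \<le> n \<Longrightarrow> vweight (wheel_V n) (wheel_adj n) f 0 = (\<Sum>i\<in>{1..n}. f i)"
  unfolding vweight_def by (simp add: wheel_nbhd_centre)

lemma vweight_wheel_rim:
  assumes "3 \<le> n" "i \<in> {1..n}"
  shows "vweight (wheel_V n) (wheel_adj n) f i = f 0 + f (rim_prev n i) + f (rim_next n i)"
  using rim_prev_next_mem[OF assms]
  unfolding vweight_def wheel_nbhd_rim[OF assms] by simp

lemma wheel_distance_antimagicI:
  assumes n: "3 \<le> n" and g: "bij_betw g {1..n} {1..n}"
    and s_inj: "inj_on (rim_sum n g) {1..n}"
    and s_centre: "\<And>i. i \<in> {1..n} \<Longrightarrow> 2 * (n + 1 + rim_sum n g i) \<noteq> n * (n + 1)"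
  shows "distance_antimagic (wheel_V n) (wheel_adj n)"
proof -
  define f where "f = g(0 := n + 1)"
  let ?w = "vweight (wheel_V n) (wheel_adj n) f"
  have V: "wheel_V n = insert 0 {1..n}"
    unfolding wheel_V_def by auto
  have "{1..card (wheel_V n)} = insert (n + 1) {1..n}"
    unfolding wheel_V_def by auto
  then have f_bij: "bij_betw f (wheel_V n) {1..card (wheel_V n)}"
    unfolding V f_def using bij_betw_fun_upd_insert[OF g] by simp
  have w_rim: "?w i = n + 1 + rim_sum n g i" if "i \<in> {1..n}" for i
    using vweight_wheel_rim[OF n that] rim_prev_next_mem[OF n that] unfolding rim_sum_def f_def
    by simp
  have w_centre: "2 * ?w 0 = n * (n + 1)"
  proof -
    have "?w 0 = (\<Sum>i\<in>{1..n}. g i)"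
      using n by (simp add: vweight_wheel_centre f_def)
    also have "\<dots> = (\<Sum>i\<in>{1..n}. i)"
      using sum.reindex_bij_betw[OF g, of id] by simp
    finally show ?thesis
      using double_gauss_sum_from_Suc_0[of n, where 'a = nat] by simp
  qed
  have "?w 0 \<notin> ?w ` {1..n}"
  proof
    assume "?w 0 \<in> ?w ` {1..n}"
    then obtain i where "i \<in> {1..n}" "?w 0 = n + 1 + rim_sum n g i"
      using w_rim by auto
    then show False
      using s_centre w_centre by metis
  qed
  moreover have "inj_on ?w {1..n}"
  proof (rule inj_onI)
    fix i j
    assume ij: "i \<in> {1..n}" "j \<in> {1..n}" and "?w i = ?w j"
    then have "rim_sum n g i = rim_sum n g j"
      using w_rim by simp
    then show "i = j"
      using s_inj ij by (auto dest: inj_onD)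
  qed
  ultimately have "inj_on ?w (wheel_V n)"
    unfolding V by simp
  then show ?thesis
    using f_bij unfolding distance_antimagic_def by blast
qed

lemma inj_on_odd_exceptions:
  fixes h :: "nat \<Rightarrow> nat"
  assumes "inj_on h E" "\<And>i. i \<in> E \<Longrightarrow> odd (h i)" "\<And>i. i \<in> A - E \<Longrightarrow> h i = 2 * i"
  shows "inj_on h A"
proof (rule inj_onI)
  fix i j
  assume ij: "i \<in> A" "j \<in> A" and eq: "h i = h j"
  have parity: "odd (h k) \<longleftrightarrow> k \<in> E" if "k \<in> A" for k
    using assms(2,3) that by fastforce
  show "i = j"
  proof (cases "i \<in> E")
    case True
    then have "j \<in> E"
      using parity ij eq by metis
    then show ?thesis
      using True assms(1) eq by (auto dest: inj_onD)
  next
    case False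
    then have "j \<notin> E"
      using parity ij eq by metis
    then show ?thesis
      using False assms(3) ij eq by simp
  qed
qed

lemma rim_sum_id:
  assumes "3 \<le> n"
  shows "rim_sum n id 1 = n + 2" "rim_sum n id n = n"
    and "2 \<le> i \<Longrightarrow> i < n \<Longrightarrow> rim_sum n id i = 2 * i"
  using assms by (auto simp: rim_sum_def rim_prev_def rim_next_def)

lemma rim_sum_transpose_ends:
  assumes "4 \<le> n"
  shows "rim_sum n (transpose 1 n) 1 = 3" "rim_sum n (transpose 1 n) 2 = n + 3"
    and "rim_sum n (transpose 1 n) (n - 1) = n - 1" "rim_sum n (transpose 1 n) n = 2 * n - 1"
    and "3 \<le> i \<Longrightarrow> i \<le> n - 2 \<Longrightarrow> rim_sum n (transpose 1 n) i = 2 * i"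
  using assms by (auto simp: rim_sum_def rim_prev_def rim_next_def transpose_def)

lemma inj_on_rim_sum_id:
  assumes "odd n" "3 \<le> n"
  shows "inj_on (rim_sum n id) {1..n}"
proof (rule inj_on_odd_exceptions[where E = "{1, n}"])
  show "inj_on (rim_sum n id) {1, n}"
    using rim_sum_id[OF assms(2)] assms(2) by simp
  show "odd (rim_sum n id i)" if "i \<in> {1, n}" for i
    using that assms rim_sum_id[OF assms(2)] by auto
  show "rim_sum n id i = 2 * i" if "i \<in> {1..n} - {1, n}" for i
    using that assms(2) by (intro rim_sum_id(3)) auto
qed

lemma inj_on_rim_sum_transpose_ends:
  assumes "even n" "6 \<le> n"
  shows "inj_on (rim_sum n (transpose 1 n)) {1..n}"
proof (rule inj_on_odd_exceptions[where E = "{1, 2, n - 1, n}"])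
  show "inj_on (rim_sum n (transpose 1 n)) {1, 2, n - 1, n}"
    using rim_sum_transpose_ends[of n] assms(2) by simp arith
  show "odd (rim_sum n (transpose 1 n) i)" if "i \<in> {1, 2, n - 1, n}" for i
    using that assms rim_sum_transpose_ends[of n] by auto
  show "rim_sum n (transpose 1 n) i = 2 * i" if "i \<in> {1..n} - {1, 2, n - 1, n}" for i
    using that assms(2) by (intro rim_sum_transpose_ends(5)) auto
qed

lemma rim_sum_centre_gap:
  assumes "6 \<le> n" "bij_betw g {1..n} {1..n}" "i \<in> {1..n}"
  shows "2 * (n + 1 + rim_sum n g i) < n * (n + 1)"
proof -
  have "g (rim_prev n i) \<noteq> g (rim_next n i)"
    using rim_prev_next_mem[of n i] assms bij_betw_imp_inj_on[OF assms(2)]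
    by (auto dest: inj_onD)
  moreover have "g (rim_prev n i) \<le> n" "g (rim_next n i) \<le> n"
    using rim_prev_next_mem[of n i] assms bij_betwE[OF assms(2)] by auto
  ultimately have "2 * (n + 1 + rim_sum n g i) \<le> 6 * n"
    unfolding rim_sum_def by arith
  also have "\<dots> < n * (n + 1)"
    using assms(1) by simp
  finally show ?thesis .
qed

lemma distance_antimagic_wheel_odd:
  assumes "odd n" "3 \<le> n"
  shows "distance_antimagic (wheel_V n) (wheel_adj n)"
proof (rule wheel_distance_antimagicI[OF assms(2) _ inj_on_rim_sum_id[OF assms]])
  show "bij_betw id {1..n} {1..n}"
    by simp
  fix i
  assume i: "i \<in> {1..n}"
  show "2 * (n + 1 + rim_sum n id i) \<noteq> n * (n + 1)"
  proof (cases "6 \<le> n")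
    case True
    then show ?thesis
      using rim_sum_centre_gap[OF True bij_betw_id i] by simp
  next
    case False
    with assms have "n = 3 \<or> n = 5"
      by presburger
    then show ?thesis
      using i by (auto simp: rim_sum_def rim_prev_def rim_next_def)
  qed
qed

lemma distance_antimagic_wheel_even:
  assumes "even n" "6 \<le> n"
  shows "distance_antimagic (wheel_V n) (wheel_adj n)"
proof (rule wheel_distance_antimagicI[OF _ _ inj_on_rim_sum_transpose_ends[OF assms]])
  show "3 \<le> n"
    using assms(2) by simp
  show g: "bij_betw (transpose 1 n) {1..n} {1..n}"
    using assms(2) by simp
  show "2 * (n + 1 + rim_sum n (transpose 1 n) i) \<noteq> n * (n + 1)" if "i \<in> {1..n}" for i
    using rim_sum_centre_gap[OF assms(2) g that] by simp
qed

lemma not_distance_antimagic_wheel_4: "\<not> distance_antimagic (wheel_V 4) (wheel_adj 4)"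
proof (rule not_distance_antimagic_if_same_nbhd)
  show "nbhd (wheel_V 4) (wheel_adj 4) 1 = nbhd (wheel_V 4) (wheel_adj 4) 3"
    by (auto simp: wheel_nbhd_rim rim_prev_def rim_next_def)
qed (auto simp: wheel_V_def)

theorem mainTheorem12:
  shows "(\<forall>n::nat. 3 \<le> n \<and> n \<noteq> 4 \<longrightarrow> distance_antimagic (wheel_V n) (wheel_adj n))
         \<and> \<not> distance_antimagic (wheel_V 4) (wheel_adj 4)"
proof (intro conjI allI impI not_distance_antimagic_wheel_4)
  fix n :: nat
  assume n: "3 \<le> n \<and> n \<noteq> 4"
  show "distance_antimagic (wheel_V n) (wheel_adj n)"
  proof (cases "odd n")
    case True
    then show ?thesis
      using n distance_antimagic_wheel_odd by blast
  next
    case False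
    then have "6 \<le> n"
      using n by presburger
    with False show ?thesis
      using distance_antimagic_wheel_even by blast
  qed
qed

end
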